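(* In the setting described in the context, if $s>m^{2^r}$, then $\mathrm{IN}_s(X)\setminus\triangle^{(s)}(X)=\emptyset$.
   Context: Let $r\geq 2$, $G=\mathbb Z^r$ with standard basis $e_1,\dots,e_r$. For each $j$, let $(p_j^i)_{i}$ be strictly increasing positive integers with $p_j^i\mid p_j^{i+1}$, $p_j^i>2i+1$, and $\Gamma_i=\langle p_j^ie_j:1\le j\le r\rangle$, with $[\Gamma_i:\Gamma_{i+1}]>1/(1-2^{-(1/2)^{i+1}})$. Let $D_i\subseteq\mathbb Z^r$ be fundamental domains of $\mathbb Z^r/\Gamma_i$ of the form $\{x: -q^i_{1,j}\le x_j<q^i_{2,j}\}$ with $q^i_{1,j},q^i_{2,j}>i$, $q^i_{1,j}+q^i_{2,j}=p^i_j$, $0\in D_i\subseteq D_{i+1}$, $\bigcup_iD_i=\mathbb Z^r$, $D_i=\bigcup_{\gamma\in D_i\cap\Gamma_{i-1}}(\gamma+D_{i-1})$ for $i\ge2$. Let $m\ge2$, $\Sigma=\{1,\dots,m\}$, $\alpha_i\in\Sigma$ with $\alpha_i\equiv i\pmod m$. Define $\eta\in\Sigma^{\mathbb Z^r}$ by $J(0)=\{0\}$, $\eta=\alpha_1$ on $\Gamma_1$, and for $k\ge1$, $J(k)=D_k\setminus\bigcup_{i=0}^{k-1}(J(i)+\Gamma_{i+1})$, $\eta(\gamma+h)=\alpha_{k+1}$ for $h\in J(k),\gamma\in\Gamma_{k+1}$. $X$ is the closure of the shift orbit of $\eta$ (shift $\sigma^g(x)(h)=x(h-g)$). $\mathrm{IN}_s(X)$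 is the set of $(x_1,\dots,x_s)\in X^s$ such that for every product neighborhood $U_1\times\dots\times U_s$, $(U_1,\dots,U_s)$ has arbitrarily large finite independence sets, where $J\subseteq\mathbb Z^r$ is an independence set if $\bigcap_{g\in I}\sigma^{-g}U_{t(g)}\ne\emptyset$ for all nonempty finite $I\subseteq J$ and $t:I\to\{1,\dots,s\}$. $\triangle^{(s)}(X)=\{(x_1,\dots,x_s): x_i=x_j\text{ for some } i\ne j\}$. *)

theory Defs
  imports "HOL-Analysis.Analysis"
begin

text \<open>Points of Z^r are vectors of type int^'r with r = CARD('r).
  Configurations in Sigma^(Z^r) are functions (int^'r) => nat with values in {1..m};
  the function space carries the product topology (nat discrete).\<close>

definition sumset :: "('a::plus) set \<Rightarrow> 'a set \<Rightarrow> 'a set" where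
  "sumset A B = {a + b | a b. a \<in> A \<and> b \<in> B}"

definition Gam :: "('r \<Rightarrow> nat \<Rightarrow> int) \<Rightarrow> nat \<Rightarrow> (int^'r) set" where
  "Gam p i = {x. \<forall>j. p j i dvd x $ j}"

definition Dom :: "('r \<Rightarrow> nat \<Rightarrow> int) \<Rightarrow> ('r \<Rightarrow> nat \<Rightarrow> int) \<Rightarrow> nat \<Rightarrow> (int^'r) set" where
  "Dom q1 q2 i = {x. \<forall>j. - q1 j i \<le> x $ j \<and> x $ j < q2 j i}"

text \<open>JU k = (J(k), union_{i<=k} (J(i) + Gamma_{i+1}))\<close>
fun JU :: "('r \<Rightarrow> nat \<Rightarrow> int) \<Rightarrow> ('r \<Rightarrow> nat \<Rightarrow> int) \<Rightarrow> ('r \<Rightarrow> nat \<Rightarrow> int) \<Rightarrow> nat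
           \<Rightarrow> (int^'r) set \<times> (int^'r) set" where
  "JU p q1 q2 0 = ({0}, sumset (Gam p 1) {0})"
| "JU p q1 q2 (Suc k) =
     (let Jk = Dom q1 q2 (Suc k) - snd (JU p q1 q2 k)
      in (Jk, snd (JU p q1 q2 k) \<union> sumset (Gam p (Suc k + 1)) Jk))"

definition Jset :: "('r \<Rightarrow> nat \<Rightarrow> int) \<Rightarrow> ('r \<Rightarrow> nat \<Rightarrow> int) \<Rightarrow> ('r \<Rightarrow> nat \<Rightarrow> int) \<Rightarrow> nat
           \<Rightarrow> (int^'r) set" where
  "Jset p q1 q2 k = fst (JU p q1 q2 k)"

text \<open>eta(gamma + h) = alpha_{k+1} for h in J(k), gamma in Gamma_{k+1} (k >= 0; k = 0 gives
  eta = alpha_1 on Gamma_1). These sets are pairwise disjoint, so we take the unique such k.\<close>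
definition toeplitz_eta :: "('r \<Rightarrow> nat \<Rightarrow> int) \<Rightarrow> ('r \<Rightarrow> nat \<Rightarrow> int) \<Rightarrow> ('r \<Rightarrow> nat \<Rightarrow> int)
      \<Rightarrow> (nat \<Rightarrow> nat) \<Rightarrow> (int^'r) \<Rightarrow> nat" where
  "toeplitz_eta p q1 q2 \<alpha> x =
     \<alpha> (Suc (LEAST k. \<exists>\<gamma>\<in>Gam p (k + 1). \<exists>h\<in>Jset p q1 q2 k. x = \<gamma> + h))"

definition shift :: "(int^'r) \<Rightarrow> ((int^'r) \<Rightarrow> 'a) \<Rightarrow> ((int^'r) \<Rightarrow> 'a)" where
  "shift g x = (\<lambda>h. x (h - g))"

definition orbit_closure :: "((int^'r) \<Rightarrow> nat) \<Rightarrow> ((int^'r) \<Rightarrow> nat) set" where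
  "orbit_closure \<eta> = closure (range (\<lambda>g. shift g \<eta>))"

text \<open>J is an independence set for (U_0,...,U_{s-1}) (0-indexed; U_i subsets of X):
  for every nonempty finite I \<subseteq> J and t : I -> {0..s-1},
  the intersection over g in I of sigma^{-g} U_{t(g)} (preimages inside X) is nonempty.\<close>
definition indep_set :: "((int^'r) \<Rightarrow> nat) set \<Rightarrow> (nat \<Rightarrow> ((int^'r) \<Rightarrow> nat) set) \<Rightarrow> nat
      \<Rightarrow> (int^'r) set \<Rightarrow> bool" where
  "indep_set X U s J \<longleftrightarrow>
     (\<forall>I t. I \<subseteq> J \<and> finite I \<and> I \<noteq> {} \<and> t \<in> I \<rightarrow> {..<s} \<longrightarrow>
        (\<Inter>g\<in>I. {y \<in> X. shift g y \<in> U (t g)}) \<noteq> {})"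

text \<open>IN_s(X), s-tuples represented as extensional functions on {0..<s}.\<close>
definition IN_tuples :: "nat \<Rightarrow> ((int^'r) \<Rightarrow> nat) set \<Rightarrow> (nat \<Rightarrow> ((int^'r) \<Rightarrow> nat)) set" where
  "IN_tuples s X = {x \<in> {..<s} \<rightarrow>\<^sub>E X.
     \<forall>U. (\<forall>i<s. openin (top_of_set X) (U i) \<and> x i \<in> U i) \<longrightarrow>
         (\<forall>N::nat. \<exists>J. finite J \<and> N \<le> card J \<and> indep_set X U s J)}"

definition diag_tuples :: "nat \<Rightarrow> (nat \<Rightarrow> 'a) set" where
  "diag_tuples s = {x. \<exists>i<s. \<exists>j<s. i \<noteq> j \<and> x i = x j}"

end

theory Submission
  imports Defs
begin

(* Every y in X carries, for each k, the part of \<eta> of level at most k (the points of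
   D_i + \<Gamma>_(i+1), i \<le> k, where \<eta> = \<alpha>_(i+1)), translated by an offset that is unique
   modulo \<Gamma>_(k+1): adjacent levels carry different symbols, so two configurations that agree on
   D_(k+2) have compatible offsets. Independence sets of size two force all components of an
   IN-tuple to share their offsets. Finitely many points P separate the components; if K bounds
   the coordinates of P, then off the level-K skeleton each component is constant on every tile
   of \<Gamma>_(K+1), and the points of P meet at most 2^r tiles, one per set of coordinates in which
   the tile differs from that of the origin. On the skeleton all components agree. Hence the
   components are determined by their values at 2^r points, and s \<le> m^(2^r). *)

lemma open_cylinder:
  fixes v :: "'a \<Rightarrow> 'b::discrete_topology"
  assumes "finite W"
  shows "open {f. \<forall>w\<in>W. f w = v w}"
  using product_topology_basis'[where I = W and x = id and U = "\<lambda>w. {v w}"] assms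
  by (simp add: open_discrete)

lemma closed_eval_mem: "closed {f :: 'a \<Rightarrow> 'b::discrete_topology. f w \<in> B}"
proof -
  have "closed B" by (simp add: closed_def open_discrete)
  then show ?thesis using closed_vimage[of B "\<lambda>f. f w"] by (simp add: vimage_def)
qed

lemma orbit_closure_locally_shift:
  assumes "y \<in> orbit_closure \<eta>" "finite W"
  shows "\<exists>c. \<forall>w\<in>W. y w = shift c \<eta> w"
proof -
  have "y \<in> closure (range (\<lambda>g. shift g \<eta>))" using assms(1) unfolding orbit_closure_def .
  then have "range (\<lambda>g. shift g \<eta>) \<inter> {f. \<forall>w\<in>W. f w = y w} \<noteq> {}"
    using open_cylinder[OF assms(2)] by (auto simp: closure_iff_nhds_not_empty)
  then obtain c where "\<forall>w\<in>W. shift c \<eta> w = y w" by blast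
  then show ?thesis by metis
qed

lemma orbit_closure_values:
  assumes "\<And>x. \<eta> x \<in> B" "y \<in> orbit_closure \<eta>"
  shows "y h \<in> B"
proof -
  have "range (\<lambda>g. shift g \<eta>) \<subseteq> {f. f h \<in> B}" using assms(1) by (auto simp: shift_def)
  then have "orbit_closure \<eta> \<subseteq> {f. f h \<in> B}"
    unfolding orbit_closure_def by (rule closure_minimal[OF _ closed_eval_mem])
  then show ?thesis using assms(2) by blast
qed

lemma indep_set_pair:
  assumes "indep_set X U s J" "g \<in> J" "g' \<in> J" "g \<noteq> g'" "a < s" "b < s"
  shows "\<exists>y\<in>X. shift g y \<in> U a \<and> shift g' y \<in> U b"
proof -
  define t where "t v = (if v = g then a else b)" for v
  have "t \<in> {g, g'} \<rightarrow> {..<s}" using assms(5,6) by (simp add: t_def)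
  then have "(\<Inter>v\<in>{g, g'}. {y \<in> X. shift v y \<in> U (t v)}) \<noteq> {}"
    using assms(1)[unfolded indep_set_def, rule_format, of "{g, g'}" t] assms(2,3) by simp
  then show ?thesis using assms(4) by (auto simp: t_def)
qed

lemma IN_tuples_component: "x \<in> IN_tuples s Y \<Longrightarrow> a < s \<Longrightarrow> x a \<in> Y"
  by (auto simp: IN_tuples_def PiE_iff)

lemma inj_on_if_not_diag_tuples: "x \<notin> diag_tuples s \<Longrightarrow> inj_on x {..<s}"
  unfolding diag_tuples_def inj_on_def by blast

text \<open>Adding a or a' to z changes z div P by -1, 0 or 1, and the changes -1 and 1 would
  force a' - a > P or a - a' > P.\<close>
lemma div_add_eq_if_same_carry:
  fixes a a' z M P :: int
  assumes "2 * M < P" "\<bar>a\<bar> \<le> M" "\<bar>a'\<bar> \<le> M"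
    and "(a + z) div P = z div P \<longleftrightarrow> (a' + z) div P = z div P"
  shows "(a + z) div P = (a' + z) div P"
proof -
  define r where "r = z mod P"
  have P: "0 < P" using assms(1,2) by linarith
  have r: "0 \<le> r" "r < P" using P by (simp_all add: r_def)
  have split: "(b + z) div P = (b + r) div P + z div P" for b
    unfolding r_def by (smt (verit) div_add1_eq mod_div_trivial mod_mod_trivial)
  have carry: "(b + r) div P = (if b + r < 0 then -1 else if b + r < P then 0 else 1)"
    if "\<bar>b\<bar> \<le> M" for b
  proof -
    consider "b + r < 0" | "0 \<le> b + r" "b + r < P" | "P \<le> b + r" by linarith
    then show ?thesis
    proof cases
      case 1
      then show ?thesis using int_div_pos_eq[of "b + r" P "-1" "b + r + P"] that assms(1) r by simp
    next
      case 2
      then show ?thesis by simp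
    next
      case 3
      then show ?thesis using int_div_pos_eq[of "b + r" P 1 "b + r - P"] that assms(1) r by simp
    qed
  qed
  show ?thesis
  proof (cases "(a + z) div P = z div P")
    case True
    then show ?thesis using assms(4) by simp
  next
    case False
    then have "(a' + z) div P \<noteq> z div P" using assms(4) by simp
    with False show ?thesis
      using split[of a] split[of a'] carry[OF assms(2)] carry[OF assms(3)] assms(1-3)
      by (auto split: if_splits)
  qed
qed

lemma Least_mem_UN_atMost:
  fixes A :: "nat \<Rightarrow> 'a set"
  shows "(LEAST K. x \<in> (\<Union>i\<le>K. A i)) = (LEAST i. x \<in> A i)"
proof (cases "\<exists>i. x \<in> A i")
  case True
  define i0 where "i0 = (LEAST i. x \<in> A i)"
  have "x \<in> A i0" unfolding i0_def using True by (rule LeastI_ex)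
  moreover have "i0 \<le> K" if "x \<in> (\<Union>i\<le>K. A i)" for K
    using that Least_le[of "\<lambda>i. x \<in> A i"] unfolding i0_def by force
  ultimately show ?thesis unfolding i0_def[symmetric] by (intro Least_equality) auto
next
  case False
  then show ?thesis by simp
qed

lemma exists_finite_separating_set:
  assumes "finite A" "inj_on f A"
  shows "\<exists>P. finite P \<and> inj_on (\<lambda>a. restrict (f a) P) A"
proof -
  define wit where "wit ab = (SOME h. f (fst ab) h \<noteq> f (snd ab) h)" for ab
  define P where "P = wit ` {ab \<in> A \<times> A. fst ab \<noteq> snd ab}"
  have "finite P" unfolding P_def using assms(1) by simp
  moreover have "inj_on (\<lambda>a. restrict (f a) P) A"
  proof (rule inj_onI, rule ccontr)
    fix a b assume ab: "a \<in> A" "b \<in> A" "restrict (f a) P = restrict (f b) P" "a \<noteq> b"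
    then have "f a \<noteq> f b" using assms(2) by (auto dest: inj_onD)
    then have "\<exists>h. f a h \<noteq> f b h" by (auto simp: fun_eq_iff)
    then have "f a (wit (a, b)) \<noteq> f b (wit (a, b))"
      using someI_ex[of "\<lambda>h. f a h \<noteq> f b h"] by (simp add: wit_def)
    moreover have "wit (a, b) \<in> P" unfolding P_def using ab by force
    ultimately show False using ab(3) by (metis restrict_apply')
  qed
  ultimately show ?thesis by blast
qed

lemma exists_representatives:
  assumes "finite N"
  obtains Q where "Q \<subseteq> N" "card Q \<le> card (f ` N)" "\<And>h. h \<in> N \<Longrightarrow> \<exists>q\<in>Q. f q = f h"
proof -
  define rep where "rep v = (SOME h. h \<in> N \<and> f h = v)" for v
  have rep: "rep (f h) \<in> N \<and> f (rep (f h)) = f h" if "h \<in> N" for h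
    unfolding rep_def using that by (intro someI_ex[of "\<lambda>h'. h' \<in> N \<and> f h' = f h"]) blast
  show thesis
  proof
    show "rep ` f ` N \<subseteq> N" using rep by auto
    show "card (rep ` f ` N) \<le> card (f ` N)" using assms by (intro card_image_le) simp
    show "\<exists>q\<in>rep ` f ` N. f q = f h" if "h \<in> N" for h using rep[OF that] that by blast
  qed
qed

lemma card_le_power_if_inj_restrict:
  assumes "finite Q" "finite B" "inj_on (\<lambda>a. restrict (f a) Q) A"
    and "\<And>a q. a \<in> A \<Longrightarrow> q \<in> Q \<Longrightarrow> f a q \<in> B"
  shows "card A \<le> card B ^ card Q"
proof -
  have "(\<lambda>a. restrict (f a) Q) ` A \<subseteq> Q \<rightarrow>\<^sub>E B" using assms(4) by auto
  then have "card A \<le> card (Q \<rightarrow>\<^sub>E B)"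
    using card_inj_on_le[OF assms(3)] assms(1,2) by (simp add: finite_PiE)
  then show ?thesis using assms(1) by (simp add: card_PiE)
qed

lemma exists_coordinate_bound:
  fixes P :: "(int^'n) set"
  assumes "finite P"
  obtains K :: nat where "\<And>h l. h \<in> P \<Longrightarrow> \<bar>h $ l\<bar> \<le> int K"
proof -
  have "finite ((\<lambda>(h, l). nat \<bar>h $ l\<bar>) ` (P \<times> UNIV))" using assms by simp
  then obtain K where K: "\<forall>n\<in>(\<lambda>(h, l). nat \<bar>h $ l\<bar>) ` (P \<times> UNIV). n \<le> K"
    using finite_nat_set_iff_bounded_le by blast
  have "nat \<bar>h $ l\<bar> \<le> K" if "h \<in> P" for h l using K that by force
  then show thesis using that[of K] by (simp add: nat_le_iff)
qed

subsection \<open>The lattices \<Gamma>_i, the domains D_i and the construction of \<eta>\<close>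

lemma Gam_add: "x \<in> Gam p i \<Longrightarrow> y \<in> Gam p i \<Longrightarrow> x + y \<in> Gam p i"
  by (auto simp: Gam_def)

lemma Gam_diff: "x \<in> Gam p i \<Longrightarrow> y \<in> Gam p i \<Longrightarrow> x - y \<in> Gam p i"
  by (auto simp: Gam_def)

lemma Gam_minus: "x \<in> Gam p i \<Longrightarrow> - x \<in> Gam p i"
  by (auto simp: Gam_def)

lemma zero_in_Gam [simp]: "0 \<in> Gam p i"
  by (auto simp: Gam_def)

lemma add_mem_sumset_Gam_iff:
  assumes "g \<in> Gam p i"
  shows "x + g \<in> sumset (Gam p i) S \<longleftrightarrow> x \<in> sumset (Gam p i) S"
proof
  assume "x + g \<in> sumset (Gam p i) S"
  then obtain a b where "a \<in> Gam p i" "b \<in> S" "x + g = a + b" by (auto simp: sumset_def)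
  then have "a - g \<in> Gam p i" "x = (a - g) + b" using Gam_diff assms by (auto simp: algebra_simps)
  then show "x \<in> sumset (Gam p i) S" using \<open>b \<in> S\<close> unfolding sumset_def by blast
next
  assume "x \<in> sumset (Gam p i) S"
  then obtain a b where "a \<in> Gam p i" "b \<in> S" "x = a + b" by (auto simp: sumset_def)
  then have "a + g \<in> Gam p i" "x + g = (a + g) + b" using Gam_add assms by (auto simp: algebra_simps)
  then show "x + g \<in> sumset (Gam p i) S" using \<open>b \<in> S\<close> unfolding sumset_def by blast
qed

lemma finite_Dom: "finite (Dom q1 q2 k)"
proof -
  have "Dom q1 q2 k \<subseteq> vec_lambda ` (\<Pi>\<^sub>E l\<in>UNIV. {- q1 l k..<q2 l k})"
  proof
    fix x assume "x \<in> Dom q1 q2 k"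
    then have "vec_nth x \<in> (\<Pi>\<^sub>E l\<in>UNIV. {- q1 l k..<q2 l k})" by (auto simp: Dom_def)
    then show "x \<in> vec_lambda ` (\<Pi>\<^sub>E l\<in>UNIV. {- q1 l k..<q2 l k})"
      by (metis image_eqI vec_nth_inverse)
  qed
  then show ?thesis by (rule finite_subset) (simp add: finite_PiE)
qed

lemma snd_JU_eq: "snd (JU p q1 q2 K) = (\<Union>i\<le>K. sumset (Gam p (Suc i)) (Jset p q1 q2 i))"
proof (induction K)
  case 0
  show ?case by (simp add: Jset_def)
next
  case (Suc K)
  have "snd (JU p q1 q2 (Suc K)) =
      snd (JU p q1 q2 K) \<union> sumset (Gam p (Suc (Suc K))) (Jset p q1 q2 (Suc K))"
    by (simp add: Jset_def Let_def)
  with Suc.IH show ?case by (auto simp: atMost_Suc)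
qed

locale toeplitz =
  fixes p q1 q2 :: "'r::finite \<Rightarrow> nat \<Rightarrow> int"
    and m :: nat
    and \<alpha> :: "nat \<Rightarrow> nat"
  assumes p_pos: "\<And>j i. i \<ge> 1 \<Longrightarrow> p j i > 0"
    and p_incr: "\<And>j i. i \<ge> 1 \<Longrightarrow> p j i < p j (i + 1)"
    and p_dvd: "\<And>j i. i \<ge> 1 \<Longrightarrow> p j i dvd p j (i + 1)"
    and p_big: "\<And>j i. i \<ge> 1 \<Longrightarrow> p j i > 2 * int i + 1"
    and q1_big: "\<And>j i. i \<ge> 1 \<Longrightarrow> q1 j i > int i"
    and q2_big: "\<And>j i. i \<ge> 1 \<Longrightarrow> q2 j i > int i"
    and q_sum: "\<And>j i. i \<ge> 1 \<Longrightarrow> q1 j i + q2 j i = p j i"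
    and D_mono: "\<And>i. i \<ge> 1 \<Longrightarrow> Dom q1 q2 i \<subseteq> Dom q1 q2 (i + 1)"
    and D_union: "(\<Union>i\<in>{1..}. Dom q1 q2 i) = UNIV"
    and D_tile: "\<And>i. i \<ge> 2 \<Longrightarrow>
       Dom q1 q2 i = (\<Union>\<gamma>\<in>Dom q1 q2 i \<inter> Gam p (i - 1). sumset {\<gamma>} (Dom q1 q2 (i - 1)))"
    and m2: "m \<ge> 2"
    and alpha_range: "\<And>i. i \<ge> 1 \<Longrightarrow> \<alpha> i \<in> {1..m}"
    and alpha_mod: "\<And>i. i \<ge> 1 \<Longrightarrow> \<alpha> i mod m = i mod m"
begin

abbreviation \<Gamma> :: "nat \<Rightarrow> (int^'r) set" where "\<Gamma> \<equiv> Gam p"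
abbreviation D :: "nat \<Rightarrow> (int^'r) set" where "D \<equiv> Dom q1 q2"
abbreviation \<eta> :: "int^'r \<Rightarrow> nat" where "\<eta> \<equiv> toeplitz_eta p q1 q2 \<alpha>"
abbreviation X :: "(int^'r \<Rightarrow> nat) set" where "X \<equiv> orbit_closure \<eta>"

lemma Gam_antimono:
  assumes "1 \<le> a" "a \<le> b"
  shows "\<Gamma> b \<subseteq> \<Gamma> a"
proof -
  have "p j a dvd p j b" for j
    using assms(2)
  proof (induction b rule: dec_induct)
    case (step n)
    then show ?case using p_dvd[of n j] assms(1) by (auto intro: dvd_trans)
  qed simp
  then show ?thesis by (auto simp: Gam_def intro: dvd_trans)
qed

lemma Dom_eq_if_diff_in_Gam:
  assumes "k \<ge> 1" "d \<in> D k" "d' \<in> D k" "d - d' \<in> \<Gamma> k"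
  shows "d = d'"
proof -
  have "d $ l = d' $ l" for l
  proof -
    obtain t where t: "d $ l - d' $ l = p l k * t" using assms(4) by (auto simp: Gam_def)
    have "- q1 l k \<le> d $ l" "d $ l < q2 l k" "- q1 l k \<le> d' $ l" "d' $ l < q2 l k"
      using assms(2,3) by (auto simp: Dom_def)
    then have "\<bar>p l k * t\<bar> < p l k * 1" using q_sum[OF assms(1), of l] t by linarith
    then have "\<bar>t\<bar> < 1" using p_pos[OF assms(1), of l] by (simp add: abs_mult)
    then show ?thesis using t by simp
  qed
  then show ?thesis by (simp add: vec_eq_iff)
qed

subsection \<open>Tiles and layers\<close>

text \<open>The point of \<Gamma>_k whose translate of the fundamental domain D_k contains x.\<close>
definition tile_of :: "nat \<Rightarrow> int^'r \<Rightarrow> int^'r" where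
  "tile_of k x = (\<chi> l. p l k * ((x $ l + q1 l k) div p l k))"

lemma tile_of_in_Gam: "tile_of k x \<in> \<Gamma> k"
  by (simp add: tile_of_def Gam_def)

lemma diff_tile_of_in_Dom:
  assumes "k \<ge> 1"
  shows "x - tile_of k x \<in> D k"
proof -
  have "(x - tile_of k x) $ l = (x $ l + q1 l k) mod p l k - q1 l k" for l
    using div_mult_mod_eq[of "x $ l + q1 l k" "p l k"] by (simp add: tile_of_def algebra_simps)
  then show ?thesis
    using p_pos[OF assms] q_sum[OF assms] by (auto simp: Dom_def) (smt (verit) pos_mod_bound)
qed

lemma tile_of_eqI:
  assumes "k \<ge> 1" "\<gamma> \<in> \<Gamma> k" "x - \<gamma> \<in> D k"
  shows "tile_of k x = \<gamma>"
proof -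
  have "(x - \<gamma>) - (x - tile_of k x) \<in> \<Gamma> k"
    using Gam_diff[OF tile_of_in_Gam assms(2)] by simp
  then have "x - \<gamma> = x - tile_of k x"
    using Dom_eq_if_diff_in_Gam[OF assms(1,3) diff_tile_of_in_Dom[OF assms(1)]] by simp
  then show ?thesis by simp
qed

lemma tile_of_add_Gam: "k \<ge> 1 \<Longrightarrow> g \<in> \<Gamma> k \<Longrightarrow> tile_of k (x + g) = tile_of k x + g"
  by (rule tile_of_eqI) (auto simp: Gam_add tile_of_in_Gam diff_tile_of_in_Dom)

lemma tile_of_Dom: "k \<ge> 1 \<Longrightarrow> d \<in> D k \<Longrightarrow> tile_of k d = 0"
  by (rule tile_of_eqI) auto

lemma mem_Dom_Suc_iff:
  assumes "i \<ge> 1"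
  shows "x \<in> D (Suc i) \<longleftrightarrow> (\<exists>\<gamma>\<in>D (Suc i) \<inter> \<Gamma> i. x - \<gamma> \<in> D i)"
proof -
  have "x \<in> sumset {\<gamma>} (D i) \<longleftrightarrow> x - \<gamma> \<in> D i" for \<gamma>
    by (force simp: sumset_def)
  moreover have "D (Suc i) = (\<Union>\<gamma>\<in>D (Suc i) \<inter> \<Gamma> i. sumset {\<gamma>} (D i))"
    using D_tile[of "Suc i"] assms by simp
  ultimately show ?thesis by blast
qed

lemma tile_of_Suc_eq:
  assumes "i \<ge> 1" "tile_of i u = tile_of i u'"
  shows "tile_of (Suc i) u = tile_of (Suc i) u'"
proof -
  define t where "t = tile_of (Suc i) u"
  have t: "t \<in> \<Gamma> (Suc i)" "t \<in> \<Gamma> i"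
    using tile_of_in_Gam Gam_antimono[of i "Suc i"] assms(1) unfolding t_def by auto
  have "u - t \<in> D (Suc i)" using diff_tile_of_in_Dom unfolding t_def by simp
  then obtain \<gamma> where \<gamma>: "\<gamma> \<in> D (Suc i)" "\<gamma> \<in> \<Gamma> i" "u - t - \<gamma> \<in> D i"
    using mem_Dom_Suc_iff[OF assms(1)] by blast
  have "tile_of i u = t + \<gamma>"
    using tile_of_eqI[OF assms(1) Gam_add[OF t(2) \<gamma>(2)]] \<gamma>(3) by (simp add: diff_diff_eq)
  then have "u' - t - \<gamma> \<in> D i"
    using diff_tile_of_in_Dom[OF assms(1), of u'] assms(2) by (simp add: diff_diff_eq)
  then have "u' - t \<in> D (Suc i)"
    using \<gamma>(1,2) by (intro mem_Dom_Suc_iff[OF assms(1), THEN iffD2]) blast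
  then have "tile_of (Suc i) u' = t" using tile_of_eqI[OF _ t(1)] by simp
  then show ?thesis unfolding t_def by (rule sym)
qed

lemma tile_of_eq_mono:
  assumes "1 \<le> k" "k \<le> i" "tile_of k u = tile_of k u'"
  shows "tile_of i u = tile_of i u'"
  using assms(2)
proof (induction i rule: dec_induct)
  case (step n)
  then show ?case using tile_of_Suc_eq[of n u u'] assms(1) by simp
qed (rule assms(3))

text \<open>The layer D_i + \<Gamma>_(i+1), with D_0 = {0}. Its union over i \<le> K is that of the sets
  J(i) + \<Gamma>_(i+1), so \<eta> is \<alpha>_(i+1) on the points whose first layer is the i-th.\<close>
definition layer :: "nat \<Rightarrow> (int^'r) set" where
  "layer i = sumset (\<Gamma> (Suc i)) (if i = 0 then {0} else D i)"

lemma layer_0: "layer 0 = \<Gamma> 1"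
  by (auto simp: layer_def sumset_def)

lemma mem_layer_iff: "i \<ge> 1 \<Longrightarrow> x \<in> layer i \<longleftrightarrow> (\<exists>g\<in>\<Gamma> (Suc i). x - g \<in> D i)"
  by (force simp: layer_def sumset_def)

lemma Dom_subset_layer: "i \<ge> 1 \<Longrightarrow> D i \<subseteq> layer i"
  by (metis subsetI mem_layer_iff diff_zero zero_in_Gam)

lemma add_Gam_mem_layer_iff:
  assumes "g \<in> \<Gamma> (Suc K)" "i \<le> K"
  shows "x + g \<in> layer i \<longleftrightarrow> x \<in> layer i"
proof -
  have "g \<in> \<Gamma> (Suc i)" using assms Gam_antimono[of "Suc i" "Suc K"] by auto
  then show ?thesis unfolding layer_def by (rule add_mem_sumset_Gam_iff)
qed

lemma layer_iff_tile_of: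
  assumes "i \<ge> 1"
  shows "x \<in> layer i \<longleftrightarrow> tile_of (Suc i) x = tile_of i x"
proof
  assume "x \<in> layer i"
  then obtain g where g: "g \<in> \<Gamma> (Suc i)" "x - g \<in> D i" using mem_layer_iff[OF assms] by blast
  have "x - g \<in> D (Suc i)" using D_mono[OF assms] g(2) by auto
  then have "tile_of (Suc i) x = g" using tile_of_eqI g(1) by simp
  moreover have "tile_of i x = g" using tile_of_eqI[OF assms _ g(2)] g(1) Gam_antimono[of i "Suc i"] assms by auto
  ultimately show "tile_of (Suc i) x = tile_of i x" by simp
next
  assume "tile_of (Suc i) x = tile_of i x"
  then show "x \<in> layer i"
    using mem_layer_iff[OF assms] tile_of_in_Gam[of "Suc i" x] diff_tile_of_in_Dom[OF assms, of x] by auto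
qed

lemma layer_Dom_Suc: "i \<ge> 1 \<Longrightarrow> x \<in> layer i \<Longrightarrow> x \<in> D (Suc i) \<Longrightarrow> x \<in> D i"
  using layer_iff_tile_of tile_of_Dom[of "Suc i" x] diff_tile_of_in_Dom[of i x] by simp

lemma ex_layer: "\<exists>i. x \<in> layer i"
proof -
  obtain i where "i \<ge> 1" "x \<in> D i" using D_union by auto
  then show ?thesis using Dom_subset_layer by blast
qed

lemma snd_JU_eq_UN_layer: "snd (JU p q1 q2 K) = (\<Union>i\<le>K. layer i)"
proof (induction K)
  case 0
  show ?case by (simp add: layer_def)
next
  case (Suc K)
  let ?S = "snd (JU p q1 q2 K)"
  have "snd (JU p q1 q2 (Suc K)) = ?S \<union> sumset (\<Gamma> (Suc (Suc K))) (D (Suc K) - ?S)"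
    by (simp add: Let_def)
  also have "\<dots> = ?S \<union> layer (Suc K)"
  proof
    show "?S \<union> sumset (\<Gamma> (Suc (Suc K))) (D (Suc K) - ?S) \<subseteq> ?S \<union> layer (Suc K)"
      by (auto simp: layer_def sumset_def)
  next
    have "g + d \<in> ?S" if "g \<in> \<Gamma> (Suc (Suc K))" "d \<in> ?S" for g d
      using that add_Gam_mem_layer_iff[of g "Suc K" _ d] Suc.IH by (auto simp: add.commute)
    then show "?S \<union> layer (Suc K) \<subseteq> ?S \<union> sumset (\<Gamma> (Suc (Suc K))) (D (Suc K) - ?S)"
      by (auto simp: layer_def sumset_def)
  qed
  finally show ?case using Suc.IH by (auto simp: atMost_Suc)
qed

definition level :: "int^'r \<Rightarrow> nat" where
  "level x = (LEAST i. x \<in> layer i)"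

lemma eta_eq_alpha_level: "\<eta> x = \<alpha> (Suc (level x))"
proof -
  have "(\<exists>\<gamma>\<in>\<Gamma> (k + 1). \<exists>h\<in>Jset p q1 q2 k. x = \<gamma> + h) \<longleftrightarrow> x \<in> sumset (\<Gamma> (Suc k)) (Jset p q1 q2 k)"
    for k by (auto simp: sumset_def)
  moreover have "(LEAST k. x \<in> sumset (\<Gamma> (Suc k)) (Jset p q1 q2 k)) = level x"
    unfolding level_def
    by (simp add: snd_JU_eq_UN_layer flip: Least_mem_UN_atMost snd_JU_eq)
  ultimately show ?thesis by (simp add: toeplitz_eta_def)
qed

lemma level_mem_layer: "x \<in> layer (level x)"
  unfolding level_def using ex_layer by (rule LeastI_ex)

lemma not_mem_layer_below_level: "i < level x \<Longrightarrow> x \<notin> layer i"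
  unfolding level_def by (rule not_less_Least)

lemma level_eq_iff: "level x = j \<longleftrightarrow> x \<in> layer j \<and> (\<forall>i<j. x \<notin> layer i)"
  using level_mem_layer not_mem_layer_below_level
  by (metis level_def Least_equality linorder_not_le)

lemma level_add_Gam:
  assumes "g \<in> \<Gamma> (Suc K)" "j \<le> K"
  shows "level (x + g) = j \<longleftrightarrow> level x = j"
  using add_Gam_mem_layer_iff[OF assms(1)] assms(2) by (auto simp: level_eq_iff)

lemma level_gt_add_Gam: "g \<in> \<Gamma> (Suc K) \<Longrightarrow> K < level x \<Longrightarrow> K < level (x + g)"
  by (metis level_add_Gam not_less)

lemma level_eq_if_tile_of_eq:
  assumes "K < level u" "K < level u'" "tile_of (Suc K) u = tile_of (Suc K) u'"
  shows "level u = level u'"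
proof -
  have "u \<in> layer i \<longleftrightarrow> u' \<in> layer i" for i
  proof (cases "i \<le> K")
    case True
    then show ?thesis using assms(1,2) not_mem_layer_below_level by auto
  next
    case False
    then have "tile_of i u = tile_of i u'" "tile_of (Suc i) u = tile_of (Suc i) u'"
      using tile_of_eq_mono[OF _ _ assms(3)] by auto
    then show ?thesis using layer_iff_tile_of[of i] False by simp
  qed
  then show ?thesis unfolding level_def by simp
qed

lemma exists_Dom_Suc_Gam_not_Gam_Suc:
  assumes "j \<ge> 1"
  shows "\<exists>w\<in>D (Suc j) \<inter> \<Gamma> j. w \<notin> \<Gamma> (Suc j)"
proof -
  obtain l0 :: 'r where True by simp
  define \<gamma> :: "int^'r" where "\<gamma> = (\<chi> l. if l = l0 then p l0 j else 0)"
  have \<gamma>: "\<gamma> \<in> \<Gamma> j" by (simp add: Gam_def \<gamma>_def)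
  have "\<gamma> \<notin> \<Gamma> (Suc j)"
  proof
    assume "\<gamma> \<in> \<Gamma> (Suc j)"
    then have "p l0 (Suc j) dvd \<gamma> $ l0" by (simp add: Gam_def)
    then have "p l0 (Suc j) dvd p l0 j" by (simp add: \<gamma>_def)
    then show False using p_pos[OF assms, of l0] p_incr[OF assms, of l0] by (auto dest: zdvd_imp_le)
  qed
  moreover have t: "tile_of (Suc j) \<gamma> \<in> \<Gamma> (Suc j)" "tile_of (Suc j) \<gamma> \<in> \<Gamma> j"
    using tile_of_in_Gam Gam_antimono[of j "Suc j"] assms by auto
  ultimately have "\<gamma> - tile_of (Suc j) \<gamma> \<notin> \<Gamma> (Suc j)"
    using Gam_add[of "\<gamma> - tile_of (Suc j) \<gamma>" p "Suc j" "tile_of (Suc j) \<gamma>"] by auto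
  moreover have "\<gamma> - tile_of (Suc j) \<gamma> \<in> D (Suc j) \<inter> \<Gamma> j"
    using diff_tile_of_in_Dom[of "Suc j" \<gamma>] Gam_diff[OF \<gamma> t(2)] by simp
  ultimately show ?thesis by blast
qed

lemma level_Suc_if_step:
  assumes "level \<rho> = j" "j \<ge> 1 \<Longrightarrow> \<rho> \<in> D j" "u \<in> D (Suc j)"
    and "j \<ge> 1 \<Longrightarrow> u - \<rho> \<in> \<Gamma> j" "u - \<rho> \<notin> \<Gamma> (Suc j)"
  shows "level u = Suc j"
proof -
  have "u \<notin> layer i" if "i < j" for i
  proof -
    have "u - \<rho> \<in> \<Gamma> (Suc (j - 1))" using assms(4) that by simp
    then have "\<rho> + (u - \<rho>) \<in> layer i \<longleftrightarrow> \<rho> \<in> layer i"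
      using add_Gam_mem_layer_iff[of "u - \<rho>" "j - 1" i \<rho>] that by simp
    then show ?thesis using not_mem_layer_below_level assms(1) that by simp
  qed
  moreover have "u \<notin> layer j"
  proof
    assume u: "u \<in> layer j"
    show False
    proof (cases "j = 0")
      case True
      then have "u \<in> \<Gamma> 1" "\<rho> \<in> \<Gamma> 1" using u level_mem_layer[of \<rho>] assms(1) by (simp_all add: layer_0)
      then show False using Gam_diff[of u p 1 \<rho>] assms(5) True by simp
    next
      case False
      then have "u \<in> D j" using layer_Dom_Suc u assms(3) by simp
      then have "u = \<rho>" using Dom_eq_if_diff_in_Gam[of j u \<rho>] assms(2,4) False by simp
      then show False using assms(5) by simp
    qed
  qed
  ultimately show ?thesis
    using Dom_subset_layer[of "Suc j"] assms(3) by (auto simp: level_eq_iff less_Suc_eq)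
qed

lemma exists_level_in_Dom:
  assumes "j \<ge> 1"
  shows "\<exists>\<rho>\<in>D j. level \<rho> = j"
  using assms
proof (induction j rule: nat_induct_at_least)
  case base
  obtain l0 :: 'r where True by simp
  define \<rho> :: "int^'r" where "\<rho> = (\<chi> l. if l = l0 then 1 else 0)"
  have "- q1 l 1 \<le> \<rho> $ l \<and> \<rho> $ l < q2 l 1" for l
    using q1_big[of 1 l] q2_big[of 1 l] by (auto simp: \<rho>_def)
  then have "\<rho> \<in> D 1" by (simp add: Dom_def)
  moreover have "\<rho> \<notin> layer 0"
  proof
    assume "\<rho> \<in> layer 0"
    then have "p l0 1 dvd \<rho> $ l0" by (simp add: layer_0 Gam_def)
    then show False using p_big[of 1 l0] by (simp add: \<rho>_def)
  qed
  ultimately show ?case using Dom_subset_layer[of 1] by (auto simp: level_eq_iff)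
next
  case (Suc j)
  then obtain \<rho> where \<rho>: "\<rho> \<in> D j" "level \<rho> = j" by blast
  obtain w where w: "w \<in> D (Suc j)" "w \<in> \<Gamma> j" "w \<notin> \<Gamma> (Suc j)"
    using exists_Dom_Suc_Gam_not_Gam_Suc[OF Suc.hyps] by blast
  have "\<rho> + w \<in> D (Suc j)"
    using w \<rho>(1) by (intro mem_Dom_Suc_iff[OF Suc.hyps, THEN iffD2] bexI[of _ w]) auto
  moreover from this have "level (\<rho> + w) = Suc j"
    using w by (intro level_Suc_if_step[OF \<rho>(2)]) (simp_all add: \<rho>(1))
  ultimately show ?case by blast
qed

lemma exists_level_jump:
  assumes "e \<notin> \<Gamma> (Suc k)"
  shows "\<exists>j\<le>k. \<exists>x. level x = j \<and> level (x + e) = Suc j"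
proof -
  define j where "j = (LEAST j. e \<notin> \<Gamma> (Suc j))"
  have e: "e \<notin> \<Gamma> (Suc j)" unfolding j_def using assms by (rule LeastI)
  have e_Gam: "e \<in> \<Gamma> j" if "j \<ge> 1"
    using not_less_Least[of "j - 1" "\<lambda>j. e \<notin> \<Gamma> (Suc j)"] that unfolding j_def[symmetric] by simp
  obtain \<rho> where \<rho>: "level \<rho> = j" "j \<ge> 1 \<Longrightarrow> \<rho> \<in> D j"
  proof (cases "j = 0")
    case True
    have "level 0 = 0" by (simp add: level_eq_iff layer_0)
    then show thesis using that[of 0] True by simp
  next
    case False
    then show thesis using that exists_level_in_Dom[of j] by auto
  qed
  define t where "t = tile_of (Suc j) (\<rho> + e)"
  have t: "t \<in> \<Gamma> (Suc j)" by (simp add: t_def tile_of_in_Gam)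
  have "level (\<rho> - t) = j" using level_add_Gam[OF Gam_minus[OF t], of j \<rho>] \<rho>(1) by simp
  moreover have "level (\<rho> - t + e) = Suc j"
  proof (rule level_Suc_if_step[OF \<rho>])
    show "\<rho> - t + e \<in> D (Suc j)"
      using diff_tile_of_in_Dom[of "Suc j" "\<rho> + e"] by (simp add: t_def algebra_simps)
    show "\<rho> - t + e - \<rho> \<in> \<Gamma> j" if "j \<ge> 1"
      using Gam_diff[OF e_Gam[OF that], of t] t Gam_antimono[of j "Suc j"] that by (auto simp: algebra_simps)
    show "\<rho> - t + e - \<rho> \<notin> \<Gamma> (Suc j)"
    proof
      assume "\<rho> - t + e - \<rho> \<in> \<Gamma> (Suc j)"
      from Gam_add[OF this t] show False using e by (simp add: algebra_simps)
    qed
  qed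
  moreover have "j \<le> k" unfolding j_def using assms by (rule Least_le)
  ultimately show ?thesis by blast
qed

subsection \<open>Skeletons of the points of the orbit closure\<close>

definition has_skeleton :: "(int^'r \<Rightarrow> nat) \<Rightarrow> nat \<Rightarrow> int^'r \<Rightarrow> bool" where
  "has_skeleton y k c \<longleftrightarrow> (\<forall>x. level x \<le> k \<longrightarrow> y (x + c) = \<alpha> (Suc (level x)))"

lemma has_skeleton_mono: "has_skeleton y k' c \<Longrightarrow> k \<le> k' \<Longrightarrow> has_skeleton y k c"
  by (auto simp: has_skeleton_def)

lemma has_skeleton_shift_eta: "has_skeleton (shift c \<eta>) k c"
  by (simp add: has_skeleton_def shift_def eta_eq_alpha_level)

lemma has_skeleton_shift: "has_skeleton y k c \<Longrightarrow> has_skeleton (shift g y) k (c + g)"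
  by (simp add: has_skeleton_def shift_def add.assoc[symmetric])

lemma has_skeleton_cong:
  assumes "has_skeleton y k c" "c' - c \<in> \<Gamma> (Suc k)"
  shows "has_skeleton y k c'"
  unfolding has_skeleton_def
proof (intro allI impI)
  fix x assume "level x \<le> k"
  moreover have "level (x + (c' - c)) = level x"
    using level_add_Gam[OF assms(2) \<open>level x \<le> k\<close>] by simp
  ultimately show "y (x + c') = \<alpha> (Suc (level x))"
    using assms(1) unfolding has_skeleton_def by (metis add.assoc diff_add_cancel)
qed

lemma eq_if_level_le_skeleton:
  "has_skeleton y k c \<Longrightarrow> has_skeleton z k c \<Longrightarrow> level (h - c) \<le> k \<Longrightarrow> y h = z h"
  unfolding has_skeleton_def by (metis diff_add_cancel)

lemma alpha_Suc_neq: "\<alpha> (Suc j) \<noteq> \<alpha> (Suc (Suc j))"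
proof
  assume "\<alpha> (Suc j) = \<alpha> (Suc (Suc j))"
  then have "Suc j mod m = Suc (Suc j) mod m"
    using alpha_mod[of "Suc j"] alpha_mod[of "Suc (Suc j)"] by simp
  then have "m dvd 1" using mod_eq_dvd_iff_nat[of "Suc j" "Suc (Suc j)" m] by simp
  then show False using m2 by simp
qed

text \<open>A wrong offset yields a point of D_(k+2) whose levels as seen from c and from d are
  adjacent, and adjacent levels carry different symbols.\<close>
lemma skeleton_offsets_cong:
  assumes "has_skeleton y k c" "has_skeleton z (Suc k) d" "\<forall>w\<in>D (Suc (Suc k)). y w = z w"
  shows "c - d \<in> \<Gamma> (Suc k)"
proof (rule ccontr)
  assume "c - d \<notin> \<Gamma> (Suc k)"
  then obtain j x where j: "j \<le> k" "level x = j" "level (x + (c - d)) = Suc j"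
    using exists_level_jump by blast
  define g where "g = - tile_of (Suc (Suc k)) (x + c)"
  have g: "g \<in> \<Gamma> (Suc (Suc k))" by (simp add: g_def Gam_minus tile_of_in_Gam)
  have "level (x + g) = j" using level_add_Gam[OF g, of j x] j by simp
  then have "y (x + g + c) = \<alpha> (Suc j)" using assms(1) j(1) by (simp add: has_skeleton_def)
  moreover have "level (x + g + (c - d)) = Suc j"
    using level_add_Gam[OF g, of "Suc j" "x + (c - d)"] j by (simp add: algebra_simps)
  then have "z (x + g + c) = \<alpha> (Suc (Suc j))"
    using assms(2) j(1) unfolding has_skeleton_def by (metis Suc_le_mono add.assoc diff_add_cancel)
  moreover have "x + g + c \<in> D (Suc (Suc k))"
    using diff_tile_of_in_Dom[of "Suc (Suc k)" "x + c"] by (simp add: g_def algebra_simps)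
  ultimately show False using assms(3) alpha_Suc_neq by metis
qed

lemma eta_in_range: "\<eta> x \<in> {1..m}"
  using alpha_range by (simp add: toeplitz_eta_def)

lemma closed_has_skeleton: "closed {y. has_skeleton y k c}"
proof -
  have "{y. has_skeleton y k c} = (\<Inter>x\<in>{x. level x \<le> k}. {y. y (x + c) \<in> {\<alpha> (Suc (level x))}})"
    by (auto simp: has_skeleton_def)
  also have "closed \<dots>" by (intro closed_INT ballI closed_eval_mem)
  finally show ?thesis .
qed

lemma X_has_skeleton:
  assumes "y \<in> X"
  shows "\<exists>c. has_skeleton y k c"
proof -
  have "shift g \<eta> \<in> (\<Union>c\<in>D (Suc k). {y. has_skeleton y k c})" for g
  proof -
    have "(g - tile_of (Suc k) g) - g \<in> \<Gamma> (Suc k)" by (simp add: Gam_minus tile_of_in_Gam)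
    then have "has_skeleton (shift g \<eta>) k (g - tile_of (Suc k) g)"
      by (rule has_skeleton_cong[OF has_skeleton_shift_eta])
    then show ?thesis using diff_tile_of_in_Dom[of "Suc k" g] by auto
  qed
  moreover have "closed (\<Union>c\<in>D (Suc k). {y. has_skeleton y k c})"
    by (simp add: closed_UN finite_Dom closed_has_skeleton)
  ultimately have "X \<subseteq> (\<Union>c\<in>D (Suc k). {y. has_skeleton y k c})"
    unfolding orbit_closure_def by (intro closure_minimal) auto
  then show ?thesis using assms by blast
qed

text \<open>Near h and h', y is a translate of \<eta> with offset congruent to w modulo \<Gamma>_(K+1), and
  \<eta> has constant level on a \<Gamma>_(K+1)-tile outside the first K layers.\<close>
lemma eq_if_same_tile:
  assumes "y \<in> X" "has_skeleton y K w" "K < level (h - w)" "K < level (h' - w)"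
    and "tile_of (Suc K) (h - w) = tile_of (Suc K) (h' - w)"
  shows "y h = y h'"
proof -
  obtain c where c: "\<forall>v\<in>D (Suc (Suc K)) \<union> {h, h'}. y v = shift c \<eta> v"
    using orbit_closure_locally_shift[OF assms(1)] finite_Dom by (meson finite_Un finite.emptyI finite.insertI)
  have g: "w - c \<in> \<Gamma> (Suc K)"
    using skeleton_offsets_cong[OF assms(2) has_skeleton_shift_eta] c by simp
  have u: "h - c = (h - w) + (w - c)" "h' - c = (h' - w) + (w - c)" by simp_all
  have "K < level (h - c)" "K < level (h' - c)"
    unfolding u by (rule level_gt_add_Gam[OF g assms(3)], rule level_gt_add_Gam[OF g assms(4)])
  moreover have "tile_of (Suc K) (h - c) = tile_of (Suc K) (h' - c)"
    using tile_of_add_Gam[OF _ g, of "h - w"] tile_of_add_Gam[OF _ g, of "h' - w"] assms(5)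
    unfolding u by simp
  ultimately have "level (h - c) = level (h' - c)" by (rule level_eq_if_tile_of_eq)
  then show ?thesis using c by (simp add: shift_def eta_eq_alpha_level)
qed

definition carry_set :: "nat \<Rightarrow> int^'r \<Rightarrow> int^'r \<Rightarrow> 'r set" where
  "carry_set K w h = {l. tile_of (Suc K) (h - w) $ l \<noteq> tile_of (Suc K) (- w) $ l}"

lemma tile_of_eq_if_same_carry_set:
  assumes "\<And>l. \<bar>h $ l\<bar> \<le> int K" "\<And>l. \<bar>h' $ l\<bar> \<le> int K" "carry_set K w h = carry_set K w h'"
  shows "tile_of (Suc K) (h - w) = tile_of (Suc K) (h' - w)"
proof -
  have "tile_of (Suc K) (h - w) $ l = tile_of (Suc K) (h' - w) $ l" for l
  proof -
    let ?P = "p l (Suc K)" and ?z = "q1 l (Suc K) - w $ l"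
    have P: "0 < ?P" "2 * int K < ?P" using p_pos[of "Suc K" l] p_big[of "Suc K" l] by simp_all
    have tile: "tile_of (Suc K) (v - w) $ l = ?P * ((v $ l + ?z) div ?P)" for v
      by (simp add: tile_of_def algebra_simps)
    have tile0: "tile_of (Suc K) (- w) $ l = ?P * (?z div ?P)"
      by (simp add: tile_of_def)
    have "tile_of (Suc K) (h - w) $ l = tile_of (Suc K) (- w) $ l \<longleftrightarrow>
        tile_of (Suc K) (h' - w) $ l = tile_of (Suc K) (- w) $ l"
      using assms(3) unfolding carry_set_def set_eq_iff mem_Collect_eq by blast
    then have "(h $ l + ?z) div ?P = ?z div ?P \<longleftrightarrow> (h' $ l + ?z) div ?P = ?z div ?P"
      unfolding tile tile0 using P(1) by simp
    then have "(h $ l + ?z) div ?P = (h' $ l + ?z) div ?P"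
      using div_add_eq_if_same_carry[OF P(2) assms(1,2)] by simp
    then show ?thesis using tile by simp
  qed
  then show ?thesis by (simp add: vec_eq_iff)
qed

subsection \<open>Components of an IN-tuple\<close>

lemma IN_tuple_skeleton_offsets:
  assumes x: "x \<in> IN_tuples s X" and "a < s" "b < s"
    and "has_skeleton (x a) (Suc k) da" "has_skeleton (x b) (Suc k) db"
  shows "da - db \<in> \<Gamma> (Suc k)"
proof -
  define U where "U i = X \<inter> {f. \<forall>w\<in>D (Suc (Suc k)). f w = x i w}" for i
  have "openin (top_of_set X) (U i) \<and> x i \<in> U i" if "i < s" for i
    using x that openin_open_Int[OF open_cylinder[OF finite_Dom]]
    by (auto simp: U_def IN_tuples_def PiE_iff)
  then obtain J where J: "finite J" "2 \<le> card J" "indep_set X U s J"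
    using x unfolding IN_tuples_def by blast
  then obtain g g' where gg': "g \<in> J" "g' \<in> J" "g \<noteq> g'"
    by (metis card_le_Suc0_iff_eq not_less_eq_eq numeral_2_eq_2)
  have offset: "(g - g') - (d - d') \<in> \<Gamma> (Suc k)"
    if i: "i < s" "i' < s" and d: "has_skeleton (x i) (Suc k) d" "has_skeleton (x i') (Suc k) d'"
    for i i' d d'
  proof -
    obtain y where y: "y \<in> X" "shift g y \<in> U i" "shift g' y \<in> U i'"
      using indep_set_pair[OF J(3) gg' i] by blast
    obtain c where c: "has_skeleton y k c" using X_has_skeleton[OF y(1)] by blast
    have "c + g - d \<in> \<Gamma> (Suc k)" "c + g' - d' \<in> \<Gamma> (Suc k)"
      using skeleton_offsets_cong[OF has_skeleton_shift[OF c] d(1)]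
        skeleton_offsets_cong[OF has_skeleton_shift[OF c] d(2)] y(2,3)
      by (simp_all add: U_def)
    from Gam_diff[OF this] show ?thesis by (simp add: algebra_simps)
  qed
  have "g - g' \<in> \<Gamma> (Suc k)" using offset[OF assms(2,2,4,4)] by simp
  from Gam_diff[OF this offset[OF assms(2-5)]] show ?thesis by simp
qed

lemma IN_tuple_common_skeleton:
  assumes x: "x \<in> IN_tuples s X"
  obtains \<omega> where "\<And>a k. a < s \<Longrightarrow> has_skeleton (x a) k (\<omega> k)"
proof (cases "s = 0")
  case False
  note X = IN_tuples_component[OF x]
  define \<omega> where "\<omega> k = (SOME c. has_skeleton (x 0) (Suc k) c)" for k
  have \<omega>: "has_skeleton (x 0) (Suc k) (\<omega> k)" for k
    unfolding \<omega>_def using X_has_skeleton[OF X] False by (blast intro: someI_ex)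
  have "has_skeleton (x a) k (\<omega> k)" if a: "a < s" for a k
  proof -
    obtain d where d: "has_skeleton (x a) (Suc k) d" using X_has_skeleton[OF X[OF a]] by blast
    have "\<omega> k - d \<in> \<Gamma> (Suc k)" using IN_tuple_skeleton_offsets[OF x _ a \<omega> d] False by simp
    then show ?thesis using has_skeleton_cong[OF has_skeleton_mono[OF d]] by simp
  qed
  then show thesis using that by blast
qed (use that in simp)


lemma card_le_if_common_skeleton:
  fixes x :: "nat \<Rightarrow> int^'r \<Rightarrow> nat"
  assumes X: "\<And>a. a < s \<Longrightarrow> x a \<in> X" and inj: "inj_on x {..<s}"
    and skel: "\<And>a k. a < s \<Longrightarrow> has_skeleton (x a) k (\<omega> k)"
  shows "s \<le> m ^ 2 ^ CARD('r)"
proof -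
  obtain P where P: "finite P" "inj_on (\<lambda>a. restrict (x a) P) {..<s}"
    using exists_finite_separating_set[OF _ inj] by blast
  obtain K where K: "\<And>h l. h \<in> P \<Longrightarrow> \<bar>h $ l\<bar> \<le> int K"
    using exists_coordinate_bound[OF P(1)] by blast
  define N where "N = {h \<in> P. K < level (h - \<omega> K)}"
  obtain Q where Q: "Q \<subseteq> N" "card Q \<le> card (carry_set K (\<omega> K) ` N)"
    and rep: "\<And>h. h \<in> N \<Longrightarrow> \<exists>q\<in>Q. carry_set K (\<omega> K) q = carry_set K (\<omega> K) h"
    using exists_representatives[of N] P(1) by (auto simp: N_def)
  have "finite Q" using P(1) by (intro finite_subset[OF Q(1)]) (simp add: N_def)
  have "card Q \<le> 2 ^ CARD('r)"
    using Q(2) card_mono[of "UNIV :: 'r set set" "carry_set K (\<omega> K) ` N"] by (simp add: card_UNIV_set)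
  have agree: "x a h = x b h"
    if ab: "a < s" "b < s" and "h \<in> P" "restrict (x a) Q = restrict (x b) Q" for a b h
  proof (cases "h \<in> N")
    case False
    then have "level (h - \<omega> K) \<le> K" using \<open>h \<in> P\<close> by (simp add: N_def)
    then show ?thesis by (rule eq_if_level_le_skeleton[OF skel[OF ab(1)] skel[OF ab(2)]])
  next
    case True
    then obtain q where q: "q \<in> Q" "carry_set K (\<omega> K) q = carry_set K (\<omega> K) h"
      using rep[OF True] by blast
    have hq: "h \<in> P" "q \<in> P" "K < level (h - \<omega> K)" "K < level (q - \<omega> K)"
      using True q(1) Q(1) by (auto simp: N_def)
    have "x c h = x c q" if "c < s" for c
      using eq_if_same_tile[OF X[OF that] skel[OF that] hq(3,4)]
        tile_of_eq_if_same_carry_set[OF K[OF hq(1)] K[OF hq(2)] q(2)[symmetric]] .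
    moreover have "x a q = x b q" using fun_cong[OF that(4), of q] q(1) by simp
    ultimately show ?thesis using ab by simp
  qed
  have "inj_on (\<lambda>a. restrict (x a) Q) {..<s}"
  proof (rule inj_onI)
    fix a b assume ab: "a \<in> {..<s}" "b \<in> {..<s}" and "restrict (x a) Q = restrict (x b) Q"
    then have "restrict (x a) P = restrict (x b) P"
      by (intro restrict_ext) (use agree[of a b] in simp)
    from inj_onD[OF P(2) this ab] show "a = b" .
  qed
  then have "card {..<s} \<le> card {1..m} ^ card Q"
    using card_le_power_if_inj_restrict[OF \<open>finite Q\<close> finite_atLeastAtMost]
      orbit_closure_values[OF eta_in_range X] by blast
  also have "\<dots> \<le> m ^ 2 ^ CARD('r)"
    using \<open>card Q \<le> 2 ^ CARD('r)\<close> m2 by (simp add: power_increasing)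
  finally show ?thesis by simp
qed

end

theorem corollary4p9:
  fixes p q1 q2 :: "'r::finite \<Rightarrow> nat \<Rightarrow> int"
    and m s :: nat
    and \<alpha> :: "nat \<Rightarrow> nat"
  assumes r2: "CARD('r) \<ge> 2"
    and p_pos: "\<And>j i. i \<ge> 1 \<Longrightarrow> p j i > 0"
    and p_incr: "\<And>j i. i \<ge> 1 \<Longrightarrow> p j i < p j (i + 1)"
    and p_dvd: "\<And>j i. i \<ge> 1 \<Longrightarrow> p j i dvd p j (i + 1)"
    and p_big: "\<And>j i. i \<ge> 1 \<Longrightarrow> p j i > 2 * int i + 1"
    and index: "\<And>i. i \<ge> 1 \<Longrightarrow>
       (\<Prod>j\<in>UNIV. real_of_int (p j (i + 1)) / real_of_int (p j i))
         > 1 / (1 - 2 powr (- ((1/2) ^ (i + 1))))"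
    and q1_big: "\<And>j i. i \<ge> 1 \<Longrightarrow> q1 j i > int i"
    and q2_big: "\<And>j i. i \<ge> 1 \<Longrightarrow> q2 j i > int i"
    and q_sum: "\<And>j i. i \<ge> 1 \<Longrightarrow> q1 j i + q2 j i = p j i"
    and D_zero: "\<And>i. i \<ge> 1 \<Longrightarrow> 0 \<in> Dom q1 q2 i"
    and D_mono: "\<And>i. i \<ge> 1 \<Longrightarrow> Dom q1 q2 i \<subseteq> Dom q1 q2 (i + 1)"
    and D_union: "(\<Union>i\<in>{1..}. Dom q1 q2 i) = UNIV"
    and D_tile: "\<And>i. i \<ge> 2 \<Longrightarrow>
       Dom q1 q2 i = (\<Union>\<gamma>\<in>Dom q1 q2 i \<inter> Gam p (i - 1). sumset {\<gamma>} (Dom q1 q2 (i - 1)))"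
    and m2: "m \<ge> 2"
    and alpha_range: "\<And>i. i \<ge> 1 \<Longrightarrow> \<alpha> i \<in> {1..m}"
    and alpha_mod: "\<And>i. i \<ge> 1 \<Longrightarrow> \<alpha> i mod m = i mod m"
    and s_big: "s > m ^ (2 ^ CARD('r))"
  shows "IN_tuples s (orbit_closure (toeplitz_eta p q1 q2 \<alpha>)) - diag_tuples s = {}"
proof (rule equals0I)
  \<comment> \<open>The index condition, r \<ge> 2 and 0 \<in> D_i are not needed for this upper bound.\<close>
  interpret toeplitz p q1 q2 m \<alpha>
    by unfold_locales (fact assms)+
  fix x assume "x \<in> IN_tuples s X - diag_tuples s"
  then have x: "x \<in> IN_tuples s X" and "inj_on x {..<s}"
    by (auto intro: inj_on_if_not_diag_tuples)
  obtain \<omega> where "\<And>a k. a < s \<Longrightarrow> has_skeleton (x a) k (\<omega> k)"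
    using IN_tuple_common_skeleton[OF x] by blast
  with IN_tuples_component[OF x] \<open>inj_on x {..<s}\<close> have "s \<le> m ^ 2 ^ CARD('r)"
    by (rule card_le_if_common_skeleton)
  with s_big show False by simp
qed

end
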